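(* Let $\boldsymbol X$ be an $n\times d$ data matrix (rows $\boldsymbol x_1,\ldots,\boldsymbol x_n\in\mathbb R^d$), and let $\hat{\boldsymbol\mu}$ be a location estimator, i.e. a map assigning to every $n\times d$ data matrix a vector in $\mathbb R^d$, satisfying the following property: whenever all rows of a data matrix lie in a lower-dimensional affine subspace of $\mathbb R^d$, the estimate $\hat{\boldsymbol\mu}$ of that data matrix lies in that subspace as well. Then the finite-sample cellwise breakdown value satisfies $$\varepsilon^*_n(\hat{\boldsymbol\mu},\boldsymbol X)\leqslant \left\lceil \frac{n}{d}\right\rceil\Big/ n .$$
   Context: For an integer $m\ge 0$, $\boldsymbol X^m$ denotes any corrupted data matrix obtained from $\boldsymbol X$ by replacing at most $m$ cells (entries) in each column of $\boldsymbol X$ by arbitrary real values. The finite-sample cellwise breakdown value of $\hat{\boldsymbol\mu}$ at $\boldsymbol X$ is $$\varepsilon^*_n(\hat{\boldsymbol\mu},\boldsymbol X)=\min\Big\{\tfrac{m}{n}:\ \sup_{\boldsymbol X^m}\|\hat{\boldsymbol\mu}(\boldsymbol X^m)-\hat{\boldsymbol\mu}(\boldsymbol X)\|=\infty\Big\},$$ the supremum being over all such corrupted matrices $\boldsymbol X^m$. *)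

theory Defs
  imports "HOL-Analysis.Analysis"
begin

text \<open>A data matrix with n rows and d columns is an element of real^'d^'n:
  row i is X$i (a vector in R^d), cell (i,j) is X$i$j; n = CARD('n), d = CARD('d).\<close>

definition cellwise_corruptions :: "nat \<Rightarrow> real^'d^'n \<Rightarrow> (real^'d^'n) set" where
  "cellwise_corruptions m X = {Y. \<forall>j. card {i. Y$i$j \<noteq> X$i$j} \<le> m}"

definition cellwise_breakdown :: "(real^'d^'n \<Rightarrow> real^'d) \<Rightarrow> real^'d^'n \<Rightarrow> real" where
  "cellwise_breakdown mu X =
     Inf {real m / real CARD('n) | m.
            (SUP Y\<in>cellwise_corruptions m X. ereal (norm (mu Y - mu X))) = \<infinity>}"

end

theory Submission
  imports Defs
begin

text \<open>Assign to every row i a column g i so that each column receives at most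
  \<lceil>n/d\<rceil> rows. Overwriting the cell (i, g i) of every row, the rows can be made to
  sum to any prescribed t, i.e. to lie on the hyperplane \<open>x\<^sub>1 + \<dots> + x\<^sub>d = t\<close>.
  By assumption the estimate lies on that hyperplane too, so its norm is at least
  |t|/d, which is unbounded in t although only \<lceil>n/d\<rceil> cells per column were changed.\<close>

lemma exists_map_card_fibres_le:
  assumes "finite A" and "finite B" and "card A \<le> card B * m"
  shows "\<exists>f. f ` A \<subseteq> B \<and> (\<forall>b. card {a\<in>A. f a = b} \<le> m)"
  using assms(1,3)
proof (induction A rule: finite_induct)
  case empty
  show ?case by simp
next
  case (insert x A)
  then obtain f where f_into: "f ` A \<subseteq> B" and f_fibres: "\<forall>b. card {a\<in>A. f a = b} \<le> m"
    by auto
  have "\<exists>b\<in>B. card {a\<in>A. f a = b} < m"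
  proof (rule ccontr)
    assume "\<not> ?thesis"
    then have "card B * m \<le> (\<Sum>b\<in>B. card {a\<in>A. f a = b})"
      by (intro sum_bounded_below[of B m, simplified]) (simp add: not_less)
    also have "\<dots> = card A"
      using sum_fun_comp[OF insert(1) assms(2) f_into, of "\<lambda>_. 1::nat"] by simp
    finally show False using insert by simp
  qed
  then obtain b where "b \<in> B" and b: "card {a\<in>A. f a = b} < m" by blast
  have "card {a\<in>insert x A. (f(x := b)) a = c} \<le> m" for c
  proof (cases "c = b")
    case True
    then have "{a\<in>insert x A. (f(x := b)) a = c} = insert x {a\<in>A. f a = b}"
      using insert(2) by auto
    then have "card {a\<in>insert x A. (f(x := b)) a = c} \<le> Suc (card {a\<in>A. f a = b})"
      using insert(1) by (simp add: card_insert_if)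
    then show ?thesis using b by linarith
  next
    case False
    then have "{a\<in>insert x A. (f(x := b)) a = c} = {a\<in>A. f a = c}"
      using insert(2) by auto
    then show ?thesis using f_fibres by simp
  qed
  moreover have "(f(x := b)) ` insert x A \<subseteq> B"
    using f_into \<open>b \<in> B\<close> insert(2) by auto
  ultimately show ?case by blast
qed

lemma le_mult_nat_ceiling_divide:
  assumes "0 < d"
  shows "n \<le> d * nat \<lceil>real n / real d\<rceil>"
proof -
  have "real n / real d \<le> real (nat \<lceil>real n / real d\<rceil>)"
    by linarith
  then have "real n \<le> real (d * nat \<lceil>real n / real d\<rceil>)"
    using assms by (simp only: pos_divide_le_eq of_nat_0_less_iff of_nat_mult mult.commute)
  then show ?thesis by (simp only: of_nat_le_iff)
qed

lemma abs_sum_components_le: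
  fixes x :: "real^'d"
  shows "\<bar>\<Sum>j\<in>UNIV. x$j\<bar> \<le> real CARD('d) * norm x"
proof -
  have "\<bar>\<Sum>j\<in>UNIV. x$j\<bar> \<le> (\<Sum>j\<in>UNIV. \<bar>x$j\<bar>)" by (rule sum_abs)
  also have "\<dots> \<le> (\<Sum>j\<in>(UNIV::'d set). norm x)"
    by (intro sum_mono component_le_norm_cart)
  finally show ?thesis by simp
qed

lemma SUP_norm_diff_eq_PInfty:
  fixes f :: "'a \<Rightarrow> 'b::real_normed_vector"
  assumes "\<And>r. \<exists>y\<in>A. r \<le> norm (f y)"
  shows "(SUP y\<in>A. ereal (norm (f y - c))) = \<infinity>"
proof (rule SUP_PInfty)
  fix N :: nat
  obtain y where "y \<in> A" and "real N + norm c \<le> norm (f y)"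
    using assms by blast
  moreover have "norm (f y) \<le> norm (f y - c) + norm c"
    using norm_triangle_ineq[of "f y - c" c] by simp
  ultimately show "\<exists>y\<in>A. ereal (real N) \<le> ereal (norm (f y - c))"
    by force
qed

lemma cellwise_breakdown_le:
  fixes mu :: "real^'d^'n \<Rightarrow> real^'d" and X :: "real^'d^'n"
  assumes "(SUP Y\<in>cellwise_corruptions m X. ereal (norm (mu Y - mu X))) = \<infinity>"
  shows "cellwise_breakdown mu X \<le> real m / real CARD('n)"
  unfolding cellwise_breakdown_def
  by (rule cInf_lower) (use assms in \<open>auto intro: bdd_belowI[of _ 0]\<close>)

definition force_row_sums :: "('n \<Rightarrow> 'd) \<Rightarrow> real \<Rightarrow> real^'d^'n \<Rightarrow> real^'d^'n" where
  "force_row_sums g t X = (\<chi> i j. if j = g i then t - (\<Sum>k\<in>-{j}. X$i$k) else X$i$j)"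

lemma sum_row_force_row_sums:
  "(\<Sum>j\<in>UNIV. force_row_sums g t X $ i $ j) = t"
proof -
  have "(\<Sum>j\<in>UNIV. force_row_sums g t X $ i $ j)
      = force_row_sums g t X $ i $ g i + (\<Sum>j\<in>-{g i}. force_row_sums g t X $ i $ j)"
    by (metis Compl_eq_Diff_UNIV UNIV_I finite sum.remove)
  also have "(\<Sum>j\<in>-{g i}. force_row_sums g t X $ i $ j) = (\<Sum>j\<in>-{g i}. X$i$j)"
    by (rule sum.cong) (auto simp: force_row_sums_def)
  finally show ?thesis by (simp add: force_row_sums_def)
qed

lemma force_row_sums_in_cellwise_corruptions:
  assumes "\<And>j. card {i. g i = j} \<le> m"
  shows "force_row_sums g t X \<in> cellwise_corruptions m X"
  unfolding cellwise_corruptions_def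
proof (intro CollectI allI)
  fix j
  have "card {i. force_row_sums g t X $ i $ j \<noteq> X$i$j} \<le> card {i. g i = j}"
    by (intro card_mono) (auto simp: force_row_sums_def)
  then show "card {i. force_row_sums g t X $ i $ j \<noteq> X$i$j} \<le> m"
    using assms[of j] by linarith
qed

lemma sum_components_estimate_eq:
  fixes mu :: "real^'d^'n \<Rightarrow> real^'d"
  assumes "\<forall>Z S. affine S \<and> aff_dim S < int CARD('d) \<and> (\<forall>i. Z$i \<in> S) \<longrightarrow> mu Z \<in> S"
    and "\<And>i. (\<Sum>j\<in>UNIV. Z$i$j) = t"
  shows "(\<Sum>j\<in>UNIV. mu Z $ j) = t"
proof -
  define ones :: "real^'d" where "ones = (\<chi> j. 1)"
  have ones_inner: "ones \<bullet> x = (\<Sum>j\<in>UNIV. x$j)" for x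
    unfolding ones_def inner_vec_def by simp
  have "ones \<noteq> 0"
    unfolding ones_def by (metis vec_eq_iff zero_index zero_neq_one vec_lambda_beta)
  then have "aff_dim {x. ones \<bullet> x = t} < int CARD('d)" by simp
  moreover have "\<forall>i. Z$i \<in> {x. ones \<bullet> x = t}"
    using assms(2) ones_inner by simp
  ultimately have "mu Z \<in> {x. ones \<bullet> x = t}"
    using assms(1) affine_hyperplane by blast
  then show ?thesis using ones_inner by simp
qed

theorem proposition1:
  fixes mu :: "real^'d^'n \<Rightarrow> real^'d" and X :: "real^'d^'n"
  assumes "\<forall>Z S. affine S \<and> aff_dim S < int CARD('d) \<and> (\<forall>i. Z$i \<in> S) \<longrightarrow> mu Z \<in> S"
  shows "cellwise_breakdown mu X \<le> real_of_int \<lceil>real CARD('n) / real CARD('d)\<rceil> / real CARD('n)"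
proof -
  define m where "m = nat \<lceil>real CARD('n) / real CARD('d)\<rceil>"
  have "card (UNIV :: 'n set) \<le> card (UNIV :: 'd set) * m"
    unfolding m_def by (rule le_mult_nat_ceiling_divide) simp
  then obtain g :: "'n \<Rightarrow> 'd" where g: "\<And>j. card {i. g i = j} \<le> m"
    using exists_map_card_fibres_le[of "UNIV :: 'n set" "UNIV :: 'd set" m] by auto
  have "\<exists>Y\<in>cellwise_corruptions m X. r \<le> norm (mu Y)" for r
  proof
    let ?Y = "force_row_sums g (real CARD('d) * r) X"
    have "(\<Sum>j\<in>UNIV. mu ?Y $ j) = real CARD('d) * r"
      using sum_components_estimate_eq[OF assms sum_row_force_row_sums] .
    then have "\<bar>real CARD('d) * r\<bar> \<le> real CARD('d) * norm (mu ?Y)"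
      using abs_sum_components_le[of "mu ?Y"] by simp
    then show "r \<le> norm (mu ?Y)" by (simp add: abs_mult)
    show "?Y \<in> cellwise_corruptions m X"
      using g by (rule force_row_sums_in_cellwise_corruptions)
  qed
  then have "cellwise_breakdown mu X \<le> real m / real CARD('n)"
    by (intro cellwise_breakdown_le SUP_norm_diff_eq_PInfty)
  moreover have "real m = real_of_int \<lceil>real CARD('n) / real CARD('d)\<rceil>"
    unfolding m_def by (simp add: divide_nonneg_nonneg)
  ultimately show ?thesis by simp
qed

end
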